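(* For all integers $1\le s\le t<n$, $$\tilde{R}(\dot C_t^{(b)}\sqcup \dot C_s^{(r)},Q_n)=n+t+1.$$
   Context: $C_t$ is the chain on $t$ vertices; $\dot C_t^{(b)}$ is it colored entirely blue and $\dot C_s^{(r)}$ is $C_s$ colored entirely red. The parallel composition $\dot P_1\sqcup\dot P_2$ is the colored poset consisting of disjoint copies of $\dot P_1$ and $\dot P_2$ with every vertex of one incomparable to every vertex of the other. $Q_N$ is the Boolean lattice of all subsets of an $N$-element set ordered by inclusion. In a blue/red coloring of $Q_N$, a copy of a colored poset $\dot P$ is an induced subposet isomorphic to $P$ with matching colors. The poset Erdős–Hajnal number $\tilde{R}(\dot P,Q_n)$ is the minimum $N$ such that every blue/red coloring of $Q_N$ contains a copy of $\dot P$ or a monochromatic induced copy of $Q_n$. *)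

theory Defs
  imports Main
begin

text \<open>A colored poset is given by a carrier P, an order relation le on it, and a
coloring col (True = blue, False = red). The Boolean lattice Q_N is Pow {..<N}
ordered by inclusion; a blue/red coloring of Q_N is a map c :: nat set \<Rightarrow> bool
(True = blue), only its values on Pow {..<N} being relevant.\<close>

definition has_copy ::
  "'a set \<Rightarrow> ('a \<Rightarrow> 'a \<Rightarrow> bool) \<Rightarrow> ('a \<Rightarrow> bool) \<Rightarrow> nat \<Rightarrow> (nat set \<Rightarrow> bool) \<Rightarrow> bool" where
  "has_copy P le col N c \<longleftrightarrow>
     (\<exists>f. f ` P \<subseteq> Pow {..<N} \<and> inj_on f P \<and>
          (\<forall>x\<in>P. \<forall>y\<in>P. le x y \<longleftrightarrow> f x \<subseteq> f y) \<and>
          (\<forall>x\<in>P. c (f x) = col x))"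

definition has_mono_Q :: "nat \<Rightarrow> nat \<Rightarrow> (nat set \<Rightarrow> bool) \<Rightarrow> bool" where
  "has_mono_Q n N c \<longleftrightarrow> (\<exists>b. has_copy (Pow {..<n}) (\<subseteq>) (\<lambda>_. b) N c)"

definition poset_EH ::
  "'a set \<Rightarrow> ('a \<Rightarrow> 'a \<Rightarrow> bool) \<Rightarrow> ('a \<Rightarrow> bool) \<Rightarrow> nat \<Rightarrow> nat" where
  "poset_EH P le col n =
     (LEAST N. \<forall>c :: nat set \<Rightarrow> bool. has_copy P le col N c \<or> has_mono_Q n N c)"

definition chains_carrier :: "nat \<Rightarrow> nat \<Rightarrow> (nat + nat) set" where
  "chains_carrier t s = Inl ` {..<t} \<union> Inr ` {..<s}"

fun chains_le :: "nat + nat \<Rightarrow> nat + nat \<Rightarrow> bool" where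
  "chains_le (Inl i) (Inl j) = (i \<le> j)"
| "chains_le (Inr i) (Inr j) = (i \<le> j)"
| "chains_le _ _ = False"

fun chains_col :: "nat + nat \<Rightarrow> bool" where
  "chains_col (Inl _) = True"
| "chains_col (Inr _) = False"

end

theory Submission
  imports Defs
begin

(* Upper bound: fix a colour b and an element a \<ge> n + k, and send S \<subseteq> [n] to
   S \<union> {n, ..., n+j-1} \<union> {a}, where j is least such that this set contains no b-coloured
   chain of j+1 sets through a.  This j grows with S, and the image is not coloured b, since
   otherwise it would extend the j-chain below it.  So either Q_n embeds in colour \<not>b or
   there is a b-coloured chain of k+1 sets through a inside [n+k] \<union> {a}.  In Q_(n+t+1) with
   no monochromatic Q_n this yields a blue t-chain through n+t and a red t-chain through n+t-1,
   both inside [n+t-1] apart from their own element, hence mutually incomparable.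

   Lower bound: colour Q_(n+t) blue exactly on the t lowest layers and on the top.  A chain of
   n+1 sets meets n+1 distinct layers, so it is neither all blue (as t < n) nor all red.  A blue
   t-chain whose members are all incomparable to some set avoids the top and starts above the
   empty set, so it climbs to layer t, which is red. *)

lemma strict_mono_on_if_le_iff:
  fixes g :: "'a::linorder \<Rightarrow> 'b::order"
  assumes "\<And>i j. i \<in> A \<Longrightarrow> j \<in> A \<Longrightarrow> i \<le> j \<longleftrightarrow> g i \<le> g j"
  shows "strict_mono_on A g"
  using assms by (intro strict_mono_onI) (auto simp: less_le_not_le)

lemma card_strict_chain:
  fixes g :: "nat \<Rightarrow> 'a set"
  assumes chain: "strict_mono_on {..<m} g" and fin: "\<And>i. i < m \<Longrightarrow> finite (g i)"
    and "i \<le> j" and "j < m"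
  shows "card (g i) + (j - i) \<le> card (g j)"
  using assms(3,4)
proof (induction j)
  case 0
  then show ?case by simp
next
  case (Suc j)
  show ?case
  proof (cases "i = Suc j")
    case False
    have "g j \<subset> g (Suc j)"
      using strict_mono_onD[OF chain] Suc.prems by simp
    then have "card (g j) < card (g (Suc j))"
      using fin Suc.prems by (simp add: psubset_card_mono)
    then show ?thesis
      using Suc False by simp
  qed simp
qed

lemma strict_mono_on_lessThan_snoc:
  fixes g :: "nat \<Rightarrow> 'a::order"
  assumes "strict_mono_on {..<m} g" and "\<And>i. i < m \<Longrightarrow> g i < y"
  shows "strict_mono_on {..<Suc m} (g(m := y))"
proof (rule strict_mono_onI)
  fix i j :: nat
  assume "i \<in> {..<Suc m}" "j \<in> {..<Suc m}" "i < j"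
  then show "(g(m := y)) i < (g(m := y)) j"
    using assms strict_mono_onD[OF assms(1), of i j] by (cases "j = m") auto
qed

lemma has_copy_mono:
  assumes "has_copy P le col N c" and "N \<le> N'"
  shows "has_copy P le col N' c"
proof -
  obtain f where f: "f ` P \<subseteq> Pow {..<N}" "inj_on f P"
      "\<forall>x\<in>P. \<forall>y\<in>P. le x y \<longleftrightarrow> f x \<subseteq> f y" "\<forall>x\<in>P. c (f x) = col x"
    using assms(1) unfolding has_copy_def by blast
  have "Pow {..<N} \<subseteq> Pow {..<N'}"
    using assms(2) by (simp add: Pow_mono)
  then have "f ` P \<subseteq> Pow {..<N'}" using f(1) by blast
  then show ?thesis
    using f(2-4) unfolding has_copy_def by blast
qed

lemma has_mono_Q_mono:
  assumes "has_mono_Q n N c" and "N \<le> N'"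
  shows "has_mono_Q n N' c"
  using assms has_copy_mono unfolding has_mono_Q_def by blast

lemma has_copy_Pow_imp_chain:
  assumes "has_copy (Pow {..<n}) (\<subseteq>) (\<lambda>_. b) N c"
  obtains g where "strict_mono_on {..<Suc n} g"
    and "\<And>i. i \<le> n \<Longrightarrow> g i \<subseteq> {..<N} \<and> c (g i) = b"
proof -
  obtain f where f: "f ` Pow {..<n} \<subseteq> Pow {..<N}"
      "\<forall>x\<in>Pow {..<n}. \<forall>y\<in>Pow {..<n}. x \<subseteq> y \<longleftrightarrow> f x \<subseteq> f y"
      "\<forall>x\<in>Pow {..<n}. c (f x) = b"
    using assms unfolding has_copy_def by blast
  show thesis
  proof (rule that)
    show "strict_mono_on {..<Suc n} (\<lambda>i. f {..<i})"
    proof (rule strict_mono_on_if_le_iff)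
      fix i j assume "i \<in> {..<Suc n}" "j \<in> {..<Suc n}"
      then show "i \<le> j \<longleftrightarrow> f {..<i} \<le> f {..<j}"
        using f(2)[rule_format, of "{..<i}" "{..<j}"] by simp
    qed
    show "f {..<i} \<subseteq> {..<N} \<and> c (f {..<i}) = b" if "i \<le> n" for i
      using f(1,3) that by auto
  qed
qed

lemma has_copy_PowI:
  assumes embed: "\<And>S. S \<subseteq> {..<n} \<Longrightarrow> \<phi> S \<subseteq> {..<N} \<and> \<phi> S \<inter> {..<n} = S \<and> c (\<phi> S) = b"
    and mono: "\<And>S S'. S \<subseteq> S' \<Longrightarrow> S' \<subseteq> {..<n} \<Longrightarrow> \<phi> S \<subseteq> \<phi> S'"
  shows "has_copy (Pow {..<n}) (\<subseteq>) (\<lambda>_. b) N c"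
proof -
  have iff: "S \<subseteq> S' \<longleftrightarrow> \<phi> S \<subseteq> \<phi> S'" if "S \<subseteq> {..<n}" "S' \<subseteq> {..<n}" for S S'
    using mono[OF _ that(2)] embed[OF that(1)] embed[OF that(2)] by blast
  then have "inj_on \<phi> (Pow {..<n})"
    by (intro inj_onI) (simp add: subset_antisym)
  moreover have "\<phi> ` Pow {..<n} \<subseteq> Pow {..<N}"
    using embed by blast
  moreover have "\<forall>S\<in>Pow {..<n}. \<forall>S'\<in>Pow {..<n}. S \<subseteq> S' \<longleftrightarrow> \<phi> S \<subseteq> \<phi> S'"
    using iff by blast
  moreover have "\<forall>S\<in>Pow {..<n}. c (\<phi> S) = b"
    using embed by blast
  ultimately show ?thesis
    unfolding has_copy_def by (intro exI[of _ \<phi>] conjI)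
qed

lemma chains_le_antisym: "chains_le x y \<Longrightarrow> chains_le y x \<Longrightarrow> x = y"
  by (cases x; cases y) auto

lemma has_copy_chains_iff:
  "has_copy (chains_carrier t s) chains_le chains_col N c \<longleftrightarrow>
    (\<exists>g h. strict_mono_on {..<t} g \<and> strict_mono_on {..<s} h \<and>
       (\<forall>i<t. g i \<subseteq> {..<N} \<and> c (g i)) \<and> (\<forall>j<s. h j \<subseteq> {..<N} \<and> \<not> c (h j)) \<and>
       (\<forall>i<t. \<forall>j<s. \<not> g i \<subseteq> h j \<and> \<not> h j \<subseteq> g i))"
  (is "?copy \<longleftrightarrow> (\<exists>g h. ?chains g h)")
proof
  assume ?copy
  then obtain f where f: "f ` chains_carrier t s \<subseteq> Pow {..<N}"
      "\<forall>x\<in>chains_carrier t s. \<forall>y\<in>chains_carrier t s. chains_le x y \<longleftrightarrow> f x \<subseteq> f y"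
      "\<forall>x\<in>chains_carrier t s. c (f x) = chains_col x"
    unfolding has_copy_def by blast
  have Inl: "Inl i \<in> chains_carrier t s" if "i < t" for i
    using that unfolding chains_carrier_def by blast
  have Inr: "Inr j \<in> chains_carrier t s" if "j < s" for j
    using that unfolding chains_carrier_def by blast
  have emb: "chains_le x y \<longleftrightarrow> f x \<subseteq> f y"
    if "x \<in> chains_carrier t s" "y \<in> chains_carrier t s" for x y
    using f(2) that by blast
  have "strict_mono_on {..<t} (f \<circ> Inl)"
    using emb[OF Inl Inl] by (intro strict_mono_on_if_le_iff) simp
  moreover have "strict_mono_on {..<s} (f \<circ> Inr)"
    using emb[OF Inr Inr] by (intro strict_mono_on_if_le_iff) simp
  moreover have "\<forall>i<t. \<forall>j<s. \<not> f (Inl i) \<subseteq> f (Inr j) \<and> \<not> f (Inr j) \<subseteq> f (Inl i)"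
    using emb[OF Inl Inr] emb[OF Inr Inl] by simp
  moreover have "\<forall>i<t. f (Inl i) \<subseteq> {..<N} \<and> c (f (Inl i))"
    using f(1,3) Inl by fastforce
  moreover have "\<forall>j<s. f (Inr j) \<subseteq> {..<N} \<and> \<not> c (f (Inr j))"
    using f(1,3) Inr by fastforce
  ultimately show "\<exists>g h. ?chains g h"
    by (intro exI[of _ "f \<circ> Inl"] exI[of _ "f \<circ> Inr"]) simp
next
  assume "\<exists>g h. ?chains g h"
  then obtain g h where chains: "?chains g h"
    by blast
  define f where "f = case_sum g h"
  have emb: "chains_le x y \<longleftrightarrow> f x \<subseteq> f y"
    if "x \<in> chains_carrier t s" "y \<in> chains_carrier t s" for x y
  proof -
    have g_iff: "i \<le> i' \<longleftrightarrow> g i \<subseteq> g i'" if "i < t" "i' < t" for i i'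
      using strict_mono_on_less_eq[of "{..<t}" g i i'] chains that by simp
    have h_iff: "j \<le> j' \<longleftrightarrow> h j \<subseteq> h j'" if "j < s" "j' < s" for j j'
      using strict_mono_on_less_eq[of "{..<s}" h j j'] chains that by simp
    from that show ?thesis
      using chains g_iff h_iff unfolding chains_carrier_def f_def by auto
  qed
  have "inj_on f (chains_carrier t s)"
    using emb chains_le_antisym by (intro inj_onI) (metis order_refl)
  moreover have "f ` chains_carrier t s \<subseteq> Pow {..<N}"
    using chains unfolding chains_carrier_def f_def by fastforce
  moreover have "\<forall>x\<in>chains_carrier t s. c (f x) = chains_col x"
    using chains unfolding chains_carrier_def f_def by auto
  moreover have "\<forall>x\<in>chains_carrier t s. \<forall>y\<in>chains_carrier t s. chains_le x y \<longleftrightarrow> f x \<subseteq> f y"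
    using emb by blast
  ultimately show ?copy
    unfolding has_copy_def by blast
qed

definition colored_chain :: "(nat set \<Rightarrow> bool) \<Rightarrow> bool \<Rightarrow> nat \<Rightarrow> nat \<Rightarrow> nat set \<Rightarrow> bool" where
  "colored_chain c b a m X \<longleftrightarrow>
     (\<exists>g. strict_mono_on {..<m} g \<and> (\<forall>i<m. a \<in> g i \<and> g i \<subseteq> X \<and> c (g i) = b))"

lemma colored_chain_0: "colored_chain c b a 0 X"
  unfolding colored_chain_def by (auto intro: strict_mono_onI)

lemma colored_chain_mono:
  assumes "colored_chain c b a m X" and "X \<subseteq> Y"
  shows "colored_chain c b a m Y"
  using assms unfolding colored_chain_def by blast

lemma colored_chain_snoc:
  assumes "colored_chain c b a m X" and "X \<subset> Y" and "a \<in> Y" and "c Y = b"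
  shows "colored_chain c b a (Suc m) Y"
proof -
  obtain g where g: "strict_mono_on {..<m} g" "\<forall>i<m. a \<in> g i \<and> g i \<subseteq> X \<and> c (g i) = b"
    using assms(1) unfolding colored_chain_def by blast
  have "strict_mono_on {..<Suc m} (g(m := Y))"
    using g assms(2) by (intro strict_mono_on_lessThan_snoc) blast+
  moreover have "\<forall>i<Suc m. a \<in> (g(m := Y)) i \<and> (g(m := Y)) i \<subseteq> Y \<and> c ((g(m := Y)) i) = b"
    using g assms(2-4) by (auto simp: less_Suc_eq)
  ultimately show ?thesis
    unfolding colored_chain_def by blast
qed

lemma colored_chain_first_failure:
  fixes F :: "nat \<Rightarrow> nat set"
  assumes step: "\<And>j. j < k \<Longrightarrow> F j \<subset> F (Suc j)" and mem: "\<And>j. a \<in> F j"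
    and fails: "\<not> colored_chain c b a (Suc k) (F k)"
  defines "j \<equiv> LEAST j. \<not> colored_chain c b a (Suc j) (F j)"
  shows "j \<le> k" and "\<not> colored_chain c b a (Suc j) (F j)" and "c (F j) \<noteq> b"
proof -
  show j_le: "j \<le> k"
    unfolding j_def by (rule Least_le) (rule fails)
  show j_fails: "\<not> colored_chain c b a (Suc j) (F j)"
    unfolding j_def by (rule LeastI) (rule fails)
  show "c (F j) \<noteq> b"
  proof
    assume color: "c (F j) = b"
    obtain X where chain: "colored_chain c b a j X" and sub: "X \<subset> F j"
    proof (cases j)
      case 0
      then show thesis
        using that[of "{}"] colored_chain_0 mem by blast
    next
      case (Suc i)
      then have "colored_chain c b a (Suc i) (F i)"
        using not_less_Least[of i "\<lambda>j. \<not> colored_chain c b a (Suc j) (F j)"]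
        unfolding j_def by auto
      moreover have "F i \<subset> F (Suc i)"
        using step j_le Suc by simp
      ultimately show thesis
        using that Suc by simp
    qed
    have "colored_chain c b a (Suc j) (F j)"
      using colored_chain_snoc[OF chain sub mem color] .
    with j_fails show False
      by contradiction
  qed
qed

lemma mono_Q_or_colored_chain:
  assumes "n + k \<le> a" and "a < N"
  shows "has_copy (Pow {..<n}) (\<subseteq>) (\<lambda>_. \<not> b) N c \<or>
         colored_chain c b a (Suc k) (insert a {..<n + k})"
proof (rule disjCI)
  assume no_chain: "\<not> colored_chain c b a (Suc k) (insert a {..<n + k})"
  define F where "F S j = insert a (S \<union> {n..<n + j})" for S j
  define J where "J S = (LEAST j. \<not> colored_chain c b a (Suc j) (F S j))" for S
  have F_mono: "F S j \<subseteq> F S' j'" if "S \<subseteq> S'" "j \<le> j'" for S S' j j'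
    using that unfolding F_def by auto
  have F_trace: "F S j \<inter> {..<n} = S" if "S \<subseteq> {..<n}" for S j
    using that assms(1) unfolding F_def by auto
  have F_step: "F S j \<subset> F S (Suc j)" if "S \<subseteq> {..<n}" "j < k" for S j
  proof -
    have "n + j \<in> F S (Suc j) - F S j"
      using that assms(1) unfolding F_def by auto
    then show ?thesis
      using F_mono[of S S j "Suc j"] by auto
  qed
  have J: "J S \<le> k" "\<not> colored_chain c b a (Suc (J S)) (F S (J S))" "c (F S (J S)) \<noteq> b"
    if S: "S \<subseteq> {..<n}" for S
  proof -
    have "F S k \<subseteq> insert a {..<n + k}"
      using S unfolding F_def by auto
    then have "\<not> colored_chain c b a (Suc k) (F S k)"
      using no_chain colored_chain_mono by blast
    moreover have "a \<in> F S j" for j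
      unfolding F_def by simp
    ultimately show "J S \<le> k" "\<not> colored_chain c b a (Suc (J S)) (F S (J S))" "c (F S (J S)) \<noteq> b"
      using colored_chain_first_failure[of k "F S" a c b] F_step[OF S] unfolding J_def by auto
  qed
  have J_mono: "J S \<le> J S'" if "S \<subseteq> S'" "S' \<subseteq> {..<n}" for S S'
  proof -
    have "\<not> colored_chain c b a (Suc (J S')) (F S (J S'))"
      using J(2)[OF that(2)] colored_chain_mono F_mono[OF that(1) order_refl] by blast
    then show ?thesis
      unfolding J_def[of S] by (rule Least_le)
  qed
  show "has_copy (Pow {..<n}) (\<subseteq>) (\<lambda>_. \<not> b) N c"
  proof (rule has_copy_PowI[where \<phi> = "\<lambda>S. F S (J S)"])
    fix S assume S: "S \<subseteq> {..<n}"
    have "F S (J S) \<subseteq> {..<N}"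
      using S J(1)[OF S] assms unfolding F_def by auto
    then show "F S (J S) \<subseteq> {..<N} \<and> F S (J S) \<inter> {..<n} = S \<and> c (F S (J S)) = (\<not> b)"
      using F_trace[OF S] J(3)[OF S] by simp
  next
    fix S S' assume "S \<subseteq> S'" "S' \<subseteq> {..<n}"
    then show "F S (J S) \<subseteq> F S' (J S')"
      using F_mono J_mono by blast
  qed
qed

lemma chains_or_mono_Q:
  assumes "0 < t" and "s \<le> t"
  shows "has_copy (chains_carrier t s) chains_le chains_col (n + t + 1) c \<or>
         has_mono_Q n (n + t + 1) c"
proof (rule disjCI)
  assume "\<not> has_mono_Q n (n + t + 1) c"
  then have no_Q: "\<not> has_copy (Pow {..<n}) (\<subseteq>) (\<lambda>_. b) (n + t + 1) c" for b
    unfolding has_mono_Q_def by blast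
  obtain k where t: "t = Suc k"
    using assms(1) gr0_implies_Suc by blast
  have "colored_chain c True (n + t) t (insert (n + t) {..<n + k})"
    using mono_Q_or_colored_chain[of n k "n + t" "n + t + 1" True c] no_Q t by auto
  then obtain g where g: "strict_mono_on {..<t} g"
      "\<forall>i<t. n + t \<in> g i \<and> g i \<subseteq> insert (n + t) {..<n + k} \<and> c (g i)"
    unfolding colored_chain_def by auto
  have "colored_chain c False (n + k) t (insert (n + k) {..<n + k})"
    using mono_Q_or_colored_chain[of n k "n + k" "n + t + 1" False c] no_Q t by auto
  then obtain h where h: "strict_mono_on {..<t} h"
      "\<forall>j<t. n + k \<in> h j \<and> h j \<subseteq> insert (n + k) {..<n + k} \<and> \<not> c (h j)"
    unfolding colored_chain_def by auto
  have "strict_mono_on {..<s} h"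
    using monotone_on_subset[OF h(1)] assms(2) by simp
  moreover have "\<forall>i<t. g i \<subseteq> {..<n + t + 1} \<and> c (g i)"
    using g(2) t by fastforce
  moreover have "\<forall>j<s. h j \<subseteq> {..<n + t + 1} \<and> \<not> c (h j)"
  proof (intro allI impI)
    fix j assume "j < s"
    then have "h j \<subseteq> insert (n + k) {..<n + k}" and "\<not> c (h j)"
      using h(2) assms(2) by auto
    then show "h j \<subseteq> {..<n + t + 1} \<and> \<not> c (h j)"
      using t by auto
  qed
  moreover have "\<forall>i<t. \<forall>j<s. \<not> g i \<subseteq> h j \<and> \<not> h j \<subseteq> g i"
  proof (intro allI impI)
    fix i j assume "i < t" "j < s"
    then have "n + t \<in> g i" "g i \<subseteq> insert (n + t) {..<n + k}"
      and "n + k \<in> h j" "h j \<subseteq> insert (n + k) {..<n + k}"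
      using g(2) h(2) assms(2) by auto
    then show "\<not> g i \<subseteq> h j \<and> \<not> h j \<subseteq> g i"
      using t by auto
  qed
  ultimately show "has_copy (chains_carrier t s) chains_le chains_col (n + t + 1) c"
    unfolding has_copy_chains_iff using g(1) by blast
qed

(* On subsets of {..<n+t} the second disjunct singles out the top element. *)
definition layer_coloring :: "nat \<Rightarrow> nat \<Rightarrow> nat set \<Rightarrow> bool" where
  "layer_coloring n t X \<longleftrightarrow> card X < t \<or> n + t \<le> card X"

lemma layer_coloring_no_mono_chain:
  assumes "t < n" and chain: "strict_mono_on {..<Suc n} g"
    and colored: "\<And>i. i \<le> n \<Longrightarrow> g i \<subseteq> {..<n + t} \<and> layer_coloring n t (g i) = b"
  shows False
proof -
  have fin: "finite (g i)" if "i < Suc n" for i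
    using colored[of i] that finite_subset by auto
  have grow: "card (g i) + (j - i) \<le> card (g j)" if "i \<le> j" "j \<le> n" for i j
    using card_strict_chain[OF chain fin, of i j] that by simp
  have bounded: "card (g i) \<le> n + t" if "i \<le> n" for i
    using card_mono[OF _ conjunct1[OF colored[OF that]]] by simp
  show False
  proof (cases b)
    case True
    have "t \<le> card (g t)"
      using grow[of 0 t] assms(1) by simp
    then have "n + t \<le> card (g t)"
      using colored[of t] True assms(1) unfolding layer_coloring_def by auto
    then show False
      using grow[of t "Suc t"] bounded[of "Suc t"] assms(1) by simp
  next
    case False
    then have "t \<le> card (g 0)"
      using colored[of 0] unfolding layer_coloring_def by auto
    then show False
      using grow[of 0 n] colored[of n] False unfolding layer_coloring_def by auto
  qed
qed

lemma layer_coloring_no_chain_with_incomparable: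
  assumes "0 < t" and chain: "strict_mono_on {..<t} g"
    and blue: "\<And>i. i < t \<Longrightarrow> g i \<subseteq> {..<n + t} \<and> layer_coloring n t (g i)"
    and "x \<subseteq> {..<n + t}" and incomparable: "\<And>i. i < t \<Longrightarrow> \<not> g i \<subseteq> x \<and> \<not> x \<subseteq> g i"
  shows False
proof -
  have fin: "finite (g i)" if "i < t" for i
    using blue[OF that] finite_subset by blast
  have small: "card (g i) < t" if "i < t" for i
  proof (rule ccontr)
    assume "\<not> card (g i) < t"
    then have "card {..<n + t} \<le> card (g i)"
      using blue[OF that] unfolding layer_coloring_def by simp
    then have "g i = {..<n + t}"
      using blue[OF that] by (simp add: card_seteq)
    then show False
      using incomparable[OF that] \<open>x \<subseteq> {..<n + t}\<close> by simp
  qed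
  have "g 0 \<noteq> {}"
    using incomparable[OF assms(1)] by auto
  then have "1 \<le> card (g 0)"
    using fin[OF assms(1)] by (simp add: Suc_leI card_gt_0_iff)
  then show False
    using card_strict_chain[OF chain fin, of 0 "t - 1"] small[of "t - 1"] assms(1) by simp
qed

lemma layer_coloring_avoids:
  assumes "0 < s" and "s \<le> t" and "t < n"
  shows "\<not> has_copy (chains_carrier t s) chains_le chains_col (n + t) (layer_coloring n t)"
    and "\<not> has_mono_Q n (n + t) (layer_coloring n t)"
proof -
  show "\<not> has_copy (chains_carrier t s) chains_le chains_col (n + t) (layer_coloring n t)"
  proof
    assume "has_copy (chains_carrier t s) chains_le chains_col (n + t) (layer_coloring n t)"
    then obtain g h :: "nat \<Rightarrow> nat set" where g: "strict_mono_on {..<t} g"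
        "\<forall>i<t. g i \<subseteq> {..<n + t} \<and> layer_coloring n t (g i)"
      and h: "\<forall>j<s. h j \<subseteq> {..<n + t} \<and> \<not> layer_coloring n t (h j)"
      and incomparable: "\<forall>i<t. \<forall>j<s. \<not> g i \<subseteq> h j \<and> \<not> h j \<subseteq> g i"
      unfolding has_copy_chains_iff by blast
    show False
    proof (rule layer_coloring_no_chain_with_incomparable[OF _ g(1)])
      show "0 < t" "h 0 \<subseteq> {..<n + t}"
        using h assms(1,2) by auto
      show "g i \<subseteq> {..<n + t} \<and> layer_coloring n t (g i)" if "i < t" for i
        using g(2) that by blast
      show "\<not> g i \<subseteq> h 0 \<and> \<not> h 0 \<subseteq> g i" if "i < t" for i
        using incomparable that assms(1) by blast
    qed
  qed
  show "\<not> has_mono_Q n (n + t) (layer_coloring n t)"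
  proof
    assume "has_mono_Q n (n + t) (layer_coloring n t)"
    then obtain b where "has_copy (Pow {..<n}) (\<subseteq>) (\<lambda>_. b) (n + t) (layer_coloring n t)"
      unfolding has_mono_Q_def by blast
    then obtain g where "strict_mono_on {..<Suc n} g"
      and "\<And>i. i \<le> n \<Longrightarrow> g i \<subseteq> {..<n + t} \<and> layer_coloring n t (g i) = b"
      by (rule has_copy_Pow_imp_chain) blast
    then show False
      using layer_coloring_no_mono_chain assms(3) by blast
  qed
qed

theorem lemma11:
  fixes s t n :: nat
  assumes "1 \<le> s" and "s \<le> t" and "t < n"
  shows "poset_EH (chains_carrier t s) chains_le chains_col n = n + t + 1"
  unfolding poset_EH_def
proof (rule Least_equality)
  show "\<forall>c. has_copy (chains_carrier t s) chains_le chains_col (n + t + 1) c \<or>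
            has_mono_Q n (n + t + 1) c"
    using chains_or_mono_Q assms by simp
next
  fix N
  assume "\<forall>c. has_copy (chains_carrier t s) chains_le chains_col N c \<or> has_mono_Q n N c"
  then have "has_copy (chains_carrier t s) chains_le chains_col N (layer_coloring n t) \<or>
             has_mono_Q n N (layer_coloring n t)"
    by blast
  then have "has_copy (chains_carrier t s) chains_le chains_col (n + t) (layer_coloring n t) \<or>
             has_mono_Q n (n + t) (layer_coloring n t)" if "N \<le> n + t"
    using has_copy_mono[of _ _ _ N _ "n + t"] has_mono_Q_mono[of n N _ "n + t"] that by blast
  then show "n + t + 1 \<le> N"
    using layer_coloring_avoids[of s t n] assms by linarith
qed

end
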